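(* Let $r,p,q\ge1$ and $n\ge0$, and suppose the variety $\mathcal V$ is $(3,2r)$-modular (i.e. has $2r+1$ Day terms) and has $n+2$ Gumm terms. Then $\mathcal V$ is $(z,w)$-modular, where $z=2^p2^q-1$ and $w=2r^q+(2^q2^{p+1}-2^{q+2}-2p+2)n$.
   Context: $\circ$ is relational composition, juxtaposition is intersection. For relations $X,Y$ and $m\ge1$, $X\circ_m Y$ denotes $X\circ Y\circ X\circ\cdots$ with $m$ factors. For $m\ge3$, a variety is $(m,k)$-modular if each of its algebras satisfies $\alpha(\beta\circ_m\alpha\gamma)\subseteq\alpha\beta\circ_k\alpha\gamma$ for all congruences $\alpha,\beta,\gamma$. A variety has $n+2$ Gumm terms if it has ternary terms $p,j_1,\dots,j_{n+1}$ satisfying: $x=j_i(x,y,x)$ for all $i$; $x=p(x,z,z)$; $p(x,x,z)=j_1(x,x,z)$; $j_i(x,z,z)=j_{i+1}(x,z,z)$ for odd $i\le n$; $j_i(x,x,z)=j_{i+1}(x,x,z)$ for even $i\le n$; $j_{n+1}(x,y,z)=z$. *)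

theory Defs
  imports Main
begin

datatype ('f, 'v) trm = Var 'v | Fn 'f "('f, 'v) trm list"

fun wf_trm :: "('f \<Rightarrow> nat) \<Rightarrow> ('f, 'v) trm \<Rightarrow> bool" where
  "wf_trm ar (Var v) = True"
| "wf_trm ar (Fn f ts) = (length ts = ar f \<and> (\<forall>t\<in>set ts. wf_trm ar t))"

fun vars_trm :: "('f, 'v) trm \<Rightarrow> 'v set" where
  "vars_trm (Var v) = {v}"
| "vars_trm (Fn f ts) = (\<Union>t\<in>set ts. vars_trm t)"

fun subst :: "('v \<Rightarrow> ('f, 'w) trm) \<Rightarrow> ('f, 'v) trm \<Rightarrow> ('f, 'w) trm" where
  "subst \<sigma> (Var v) = \<sigma> v"
| "subst \<sigma> (Fn f ts) = Fn f (map (subst \<sigma>) ts)"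

record ('f, 'a) alg =
  carrier :: "'a set"
  ops :: "'f \<Rightarrow> 'a list \<Rightarrow> 'a"

definition is_alg :: "('f \<Rightarrow> nat) \<Rightarrow> ('f, 'a) alg \<Rightarrow> bool" where
  "is_alg ar A \<longleftrightarrow> carrier A \<noteq> {} \<and>
     (\<forall>f xs. length xs = ar f \<and> set xs \<subseteq> carrier A \<longrightarrow> ops A f xs \<in> carrier A)"

fun eval :: "('f, 'a) alg \<Rightarrow> ('v \<Rightarrow> 'a) \<Rightarrow> ('f, 'v) trm \<Rightarrow> 'a" where
  "eval A \<rho> (Var v) = \<rho> v"
| "eval A \<rho> (Fn f ts) = ops A f (map (eval A \<rho>) ts)"

definition satisfies :: "('f, 'a) alg \<Rightarrow> ('f, nat) trm \<Rightarrow> ('f, nat) trm \<Rightarrow> bool" where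
  "satisfies A s t \<longleftrightarrow> (\<forall>\<rho>. (\<forall>v. \<rho> v \<in> carrier A) \<longrightarrow> eval A \<rho> s = eval A \<rho> t)"

definition models :: "('f \<Rightarrow> nat) \<Rightarrow> (('f, nat) trm \<times> ('f, nat) trm) set \<Rightarrow> ('f, 'a) alg \<Rightarrow> bool" where
  "models ar \<Sigma> A \<longleftrightarrow> is_alg ar A \<and> (\<forall>(s, t)\<in>\<Sigma>. satisfies A s t)"

definition congruence :: "('f \<Rightarrow> nat) \<Rightarrow> ('f, 'a) alg \<Rightarrow> 'a rel \<Rightarrow> bool" where
  "congruence ar A \<alpha> \<longleftrightarrow> equiv (carrier A) \<alpha> \<and>
     (\<forall>f xs ys. length xs = ar f \<and> length ys = ar f \<and> set xs \<subseteq> carrier A \<and> set ys \<subseteq> carrier A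
        \<and> list_all2 (\<lambda>x y. (x, y) \<in> \<alpha>) xs ys \<longrightarrow> (ops A f xs, ops A f ys) \<in> \<alpha>)"

fun comp_alt :: "'a rel \<Rightarrow> 'a rel \<Rightarrow> nat \<Rightarrow> 'a rel" where
  "comp_alt X Y 0 = Id"
| "comp_alt X Y (Suc m) = X O comp_alt Y X m"

definition alg_mk_modular :: "('f \<Rightarrow> nat) \<Rightarrow> nat \<Rightarrow> nat \<Rightarrow> ('f, 'a) alg \<Rightarrow> bool" where
  "alg_mk_modular ar m k A \<longleftrightarrow>
     (\<forall>\<alpha> \<beta> \<gamma>. congruence ar A \<alpha> \<and> congruence ar A \<beta> \<and> congruence ar A \<gamma> \<longrightarrow>
        \<alpha> \<inter> comp_alt \<beta> (\<alpha> \<inter> \<gamma>) m \<subseteq> comp_alt (\<alpha> \<inter> \<beta>) (\<alpha> \<inter> \<gamma>) k)"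

text \<open>(m,k)-modularity of the variety, for its algebras whose carrier lives in type 'b.\<close>
definition variety_mk_modular ::
  "'b itself \<Rightarrow> ('f \<Rightarrow> nat) \<Rightarrow> (('f, nat) trm \<times> ('f, nat) trm) set \<Rightarrow> nat \<Rightarrow> nat \<Rightarrow> bool" where
  "variety_mk_modular (_ :: 'b itself) ar \<Sigma> m k \<longleftrightarrow>
     (\<forall>A :: ('f, 'b) alg. models ar \<Sigma> A \<longrightarrow> alg_mk_modular ar m k A)"

text \<open>An identity holds in the variety (checked on its algebras with carrier in type 'b).\<close>
definition holds_in ::
  "'b itself \<Rightarrow> ('f \<Rightarrow> nat) \<Rightarrow> (('f, nat) trm \<times> ('f, nat) trm) set \<Rightarrow> ('f, nat) trm \<Rightarrow> ('f, nat) trm \<Rightarrow> bool" where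
  "holds_in (_ :: 'b itself) ar \<Sigma> s t \<longleftrightarrow> (\<forall>A :: ('f, 'b) alg. models ar \<Sigma> A \<longrightarrow> satisfies A s t)"

text \<open>t(a,b,c) for a ternary term t in the variables x = Var 0, y = Var 1, z = Var 2.\<close>
definition tern :: "('f, nat) trm \<Rightarrow> ('f, nat) trm \<Rightarrow> ('f, nat) trm \<Rightarrow> ('f, nat) trm \<Rightarrow> ('f, nat) trm" where
  "tern t a b c = subst (\<lambda>v. if v = 0 then a else if v = 1 then b else c) t"

definition ternary_term :: "('f \<Rightarrow> nat) \<Rightarrow> ('f, nat) trm \<Rightarrow> bool" where
  "ternary_term ar t \<longleftrightarrow> wf_trm ar t \<and> vars_trm t \<subseteq> {0, 1, 2}"

definition has_gumm_terms ::
  "'b itself \<Rightarrow> ('f \<Rightarrow> nat) \<Rightarrow> (('f, nat) trm \<times> ('f, nat) trm) set \<Rightarrow> nat \<Rightarrow> bool" where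
  "has_gumm_terms B ar \<Sigma> n \<longleftrightarrow>
     (\<exists>p j. ternary_term ar p \<and> (\<forall>i\<in>{1..n+1}. ternary_term ar (j i)) \<and>
       (let x = Var 0; y = Var 1; z = Var 2; hold = holds_in B ar \<Sigma> in
         (\<forall>i\<in>{1..n+1}. hold x (tern (j i) x y x)) \<and>
         hold x (tern p x z z) \<and>
         hold (tern p x x z) (tern (j 1) x x z) \<and>
         (\<forall>i. 1 \<le> i \<and> i \<le> n \<and> odd i \<longrightarrow> hold (tern (j i) x z z) (tern (j (i+1)) x z z)) \<and>
         (\<forall>i. 1 \<le> i \<and> i \<le> n \<and> even i \<longrightarrow> hold (tern (j i) x x z) (tern (j (i+1)) x x z)) \<and>
         hold (tern (j (n+1)) x y z) z))"

end

theory Submission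
  imports Defs
begin

text \<open>
  Both kinds of terms turn (2g+1, w)-modularity into (4g+3, w')-modularity.  Let
  (a, d) \<in> \<alpha> \<inter> (\<beta> o[4g+3] \<alpha>\<gamma>), where o[m] is \<open>comp_alt\<close>, via a chain x with middle elements
  b = x(2g+1) and c = x(2g+2).
  Day terms lead from a to d through the elements m_i(a,b,c,d).  Folding the chain at its quarter
  points joins m_i and m_(i+1), for even i, by a \<beta> o[2g+1] \<alpha>\<gamma> chain inside \<alpha>, hence by
  \<alpha>\<beta> o[w] \<alpha>\<gamma>, while the odd links are \<alpha>\<gamma>-steps; so w' = r w.
  For Gumm terms, folding the chain in half through p(a, x(s), x(4g+3-s)) joins a to p(a,a,d) by
  \<alpha>\<gamma> o[w] \<alpha>\<beta>, and p(a,a,d) = j_1(a,a,d), j_1(a,d,d) = j_2(a,d,d), j_2(a,a,d) = j_3(a,a,d), ..., d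
  is a path of n links of 4g+3 factors each, adjacent links merging; so w' = w + 2(2g+1)n.
  Starting from the trivial (1,2)-modularity, q Day steps followed by p-1 Gumm steps give the
  bound.  The hypotheses only concern algebras over terms; the free algebra transfers the term
  conditions to algebras of arbitrary type.
\<close>

section \<open>Alternating relational products\<close>

text \<open>The factor in position k (counting from 0) of \<open>comp_alt X Y\<close>:\<close>

definition alt_rel :: "'a rel \<Rightarrow> 'a rel \<Rightarrow> nat \<Rightarrow> 'a rel" where
  "alt_rel X Y k = (if even k then X else Y)"

lemma alt_rel_Suc_Suc [simp]: "alt_rel X Y (Suc (Suc k)) = alt_rel X Y k"
  by (simp add: alt_rel_def)

lemma comp_alt_add:
  "comp_alt X Y (m + k) = comp_alt X Y m O comp_alt (alt_rel X Y m) (alt_rel X Y (Suc m)) k"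
proof (induction m arbitrary: X Y)
  case 0
  then show ?case by (simp add: alt_rel_def)
next
  case (Suc m)
  then show ?case by (simp add: O_assoc alt_rel_def)
qed

lemma comp_alt_Suc_right: "comp_alt X Y (Suc m) = comp_alt X Y m O alt_rel X Y m"
  using comp_alt_add[of X Y m 1] by (simp add: alt_rel_def)

lemma converse_comp_alt:
  assumes "sym X" "sym Y"
  shows "(comp_alt X Y m)\<inverse> = comp_alt (alt_rel X Y (Suc m)) (alt_rel X Y m) m"
  using assms
proof (induction m arbitrary: X Y)
  case 0
  then show ?case by simp
next
  case (Suc m)
  have "(comp_alt X Y (Suc m))\<inverse> = (comp_alt Y X m)\<inverse> O X\<inverse>"
    by (simp only: comp_alt.simps converse_relcomp)
  also have "\<dots> = comp_alt (alt_rel X Y m) (alt_rel X Y (Suc m)) m O X"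
    using Suc by (simp add: alt_rel_def sym_conv_converse_eq)
  also have "\<dots> = comp_alt (alt_rel X Y m) (alt_rel X Y (Suc m)) (Suc m)"
    by (simp only: comp_alt_Suc_right) (simp add: alt_rel_def)
  finally show ?case by simp
qed

corollary converse_comp_alt_odd:
  "sym X \<Longrightarrow> sym Y \<Longrightarrow> odd m \<Longrightarrow> (comp_alt X Y m)\<inverse> = comp_alt X Y m"
  by (simp add: converse_comp_alt alt_rel_def)

corollary converse_comp_alt_even:
  "sym X \<Longrightarrow> sym Y \<Longrightarrow> even m \<Longrightarrow> (comp_alt X Y m)\<inverse> = comp_alt Y X m"
  by (simp add: converse_comp_alt alt_rel_def)

text \<open>The common factor at the junction is absorbed by transitivity:\<close>

lemma comp_alt_merge:
  assumes "trans (alt_rel X Y m)"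
  shows "comp_alt X Y (Suc m) O comp_alt (alt_rel X Y m) (alt_rel X Y (Suc m)) (Suc k)
           \<subseteq> comp_alt X Y (Suc (m + k))"
proof -
  let ?Z = "alt_rel X Y m" and ?W = "alt_rel X Y (Suc m)"
  have "?Z O ?Z \<subseteq> ?Z" using assms by (auto dest: transD)
  then have "(comp_alt X Y m O ?Z) O (?Z O comp_alt ?W ?Z k)
      \<subseteq> comp_alt X Y m O (?Z O comp_alt ?W ?Z k)"
    by (metis O_assoc relcomp_mono subset_refl)
  moreover have "comp_alt X Y (Suc m) = comp_alt X Y m O ?Z"
    by (rule comp_alt_Suc_right)
  moreover have "comp_alt ?Z ?W (Suc k) = ?Z O comp_alt ?W ?Z k"
    by simp
  moreover have "comp_alt X Y (Suc (m + k)) = comp_alt X Y m O (?Z O comp_alt ?W ?Z k)"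
    using comp_alt_add[of X Y m "Suc k"] by (simp only: add_Suc_right comp_alt.simps(2))
  ultimately show ?thesis
    by (simp only:)
qed

lemma comp_alt_O_last:
  assumes "trans (alt_rel X Y m)"
  shows "comp_alt X Y (Suc m) O alt_rel X Y m \<subseteq> comp_alt X Y (Suc m)"
  using comp_alt_merge[OF assms, of 0] by simp

lemma comp_alt_O_converse:
  assumes "sym X" "sym Y" "trans X" "trans Y"
  shows "comp_alt X Y (Suc m) O (comp_alt X Y (Suc m))\<inverse> \<subseteq> comp_alt X Y (Suc (2 * m))"
proof -
  have "trans (alt_rel X Y m)" using assms by (simp add: alt_rel_def)
  then show ?thesis
    unfolding converse_comp_alt[OF assms(1,2)] alt_rel_Suc_Suc mult_2
    by (rule comp_alt_merge)
qed

definition alt_walk :: "'a rel \<Rightarrow> 'a rel \<Rightarrow> nat \<Rightarrow> (nat \<Rightarrow> 'a) \<Rightarrow> bool" where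
  "alt_walk X Y N x \<longleftrightarrow> (\<forall>k<N. (x k, x (Suc k)) \<in> alt_rel X Y k)"

lemma comp_alt_iff_alt_walk:
  "(a, b) \<in> comp_alt X Y N \<longleftrightarrow> (\<exists>x. x 0 = a \<and> x N = b \<and> alt_walk X Y N x)"
proof (induction N arbitrary: X Y a)
  case 0
  show ?case
    by (auto simp: alt_walk_def intro: exI[of _ "\<lambda>_. a"])
next
  case (Suc N)
  show ?case
  proof
    assume "(a, b) \<in> comp_alt X Y (Suc N)"
    then obtain c x where ac: "(a, c) \<in> X" and x: "x 0 = c" "x N = b" "alt_walk Y X N x"
      using Suc.IH by fastforce
    define y where "y k = (case k of 0 \<Rightarrow> a | Suc k' \<Rightarrow> x k')" for k
    have "alt_walk X Y (Suc N) y"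
      unfolding alt_walk_def
    proof (intro allI impI)
      fix k assume "k < Suc N"
      then show "(y k, y (Suc k)) \<in> alt_rel X Y k"
        using ac x by (cases k) (auto simp: y_def alt_walk_def alt_rel_def)
    qed
    then show "\<exists>x. x 0 = a \<and> x (Suc N) = b \<and> alt_walk X Y (Suc N) x"
      using x(2) by (intro exI[of _ y]) (simp add: y_def)
  next
    assume "\<exists>x. x 0 = a \<and> x (Suc N) = b \<and> alt_walk X Y (Suc N) x"
    then obtain x where x: "x 0 = a" "x (Suc N) = b" "alt_walk X Y (Suc N) x" by blast
    have "(a, x 1) \<in> X"
      using x(1,3) by (auto simp: alt_walk_def alt_rel_def)
    moreover have "alt_walk Y X N (\<lambda>k. x (Suc k))"
      using x(3) by (auto simp: alt_walk_def alt_rel_def)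
    then have "(x 1, b) \<in> comp_alt Y X N"
      using Suc.IH x(2) by auto
    ultimately show "(a, b) \<in> comp_alt X Y (Suc N)"
      by auto
  qed
qed

lemma alt_walk_le: "alt_walk X Y N x \<Longrightarrow> M \<le> N \<Longrightarrow> alt_walk X Y M x"
  by (simp add: alt_walk_def)

lemma alt_walk_shift:
  assumes "alt_walk X Y (k + N) x" "even k"
  shows "alt_walk X Y N (\<lambda>s. x (k + s))"
  unfolding alt_walk_def
proof (intro allI impI)
  fix s assume "s < N"
  then have "(x (k + s), x (Suc (k + s))) \<in> alt_rel X Y (k + s)"
    using assms(1) by (simp add: alt_walk_def)
  then show "(x (k + s), x (k + Suc s)) \<in> alt_rel X Y s"
    using \<open>even k\<close> by (simp add: alt_rel_def)
qed

lemma alt_walk_reverse: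
  assumes "alt_walk X Y N x" "odd N" "sym X" "sym Y"
  shows "alt_walk X Y N (\<lambda>s. x (N - s))"
  unfolding alt_walk_def
proof (intro allI impI)
  fix s assume "s < N"
  then have "(x (N - Suc s), x (Suc (N - Suc s))) \<in> alt_rel X Y (N - Suc s)"
    using assms(1) by (simp add: alt_walk_def)
  moreover have "Suc (N - Suc s) = N - s" "alt_rel X Y (N - Suc s) = alt_rel X Y s"
    using \<open>s < N\<close> \<open>odd N\<close> by (auto simp: alt_rel_def)
  ultimately show "(x (N - s), x (N - Suc s)) \<in> alt_rel X Y s"
    using assms(3,4) by (auto simp: alt_rel_def dest: symD)
qed

lemma comp_alt_concat_even:
  assumes "trans Y" "even w" "w \<noteq> 0"
    and "\<forall>i<k. (e (2*i), e (Suc (2*i))) \<in> comp_alt X Y w"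
    and "\<forall>i<k. (e (Suc (2*i)), e (Suc (Suc (2*i)))) \<in> Y"
  shows "(e 0, e (2*k)) \<in> comp_alt X Y (k * w)"
  using assms(4,5)
proof (induction k)
  case 0
  then show ?case by simp
next
  case (Suc k)
  obtain m where m: "w = Suc m" "odd m" using assms(2,3) by (cases w) auto
  have "comp_alt X Y w O Y \<subseteq> comp_alt X Y w"
    using comp_alt_O_last[of X Y m] assms(1) m by (simp add: alt_rel_def)
  then have "(e (2*k), e (2 * Suc k)) \<in> comp_alt X Y w"
    using Suc.prems by fastforce
  moreover have "comp_alt X Y (k * w + w) = comp_alt X Y (k * w) O comp_alt X Y w"
    using assms(2) by (simp add: comp_alt_add alt_rel_def)
  ultimately show ?case
    using Suc by (auto simp: add.commute)
qed

lemma comp_alt_concat_odd: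
  assumes "trans X" "(v 0, v 0) \<in> X"
    and "\<forall>i<k. (v i, v (Suc i)) \<in> comp_alt X Y (Suc (2*m))"
  shows "(v 0, v k) \<in> comp_alt X Y (Suc (2*m*k))"
  using assms(3)
proof (induction k)
  case 0
  then show ?case using assms(2) by simp
next
  case (Suc k)
  have "trans (alt_rel X Y (2*m*k))" using assms(1) by (simp add: alt_rel_def)
  from comp_alt_merge[OF this, of "2*m"]
  have "comp_alt X Y (Suc (2*m*k)) O comp_alt X Y (Suc (2*m))
      \<subseteq> comp_alt X Y (Suc (2*m*k + 2*m))"
    by (simp add: alt_rel_def)
  moreover have "(v 0, v k) \<in> comp_alt X Y (Suc (2*m*k))"
    and "(v k, v (Suc k)) \<in> comp_alt X Y (Suc (2*m))"
    using Suc by auto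
  ultimately have "(v 0, v (Suc k)) \<in> comp_alt X Y (Suc (2*m*k + 2*m))"
    by blast
  then show ?case by (simp add: add.commute)
qed

section \<open>Congruences and walks through them\<close>

lemma congruence_equiv: "congruence ar A \<theta> \<Longrightarrow> equiv (carrier A) \<theta>"
  by (simp add: congruence_def)

lemma congruence_carrier: "congruence ar A \<theta> \<Longrightarrow> (x, y) \<in> \<theta> \<Longrightarrow> x \<in> carrier A \<and> y \<in> carrier A"
  unfolding congruence_def equiv_def refl_on_def by blast

lemma congruence_refl: "congruence ar A \<theta> \<Longrightarrow> x \<in> carrier A \<Longrightarrow> (x, x) \<in> \<theta>"
  unfolding congruence_def equiv_def refl_on_def by blast

lemma congruence_sym: "congruence ar A \<theta> \<Longrightarrow> (x, y) \<in> \<theta> \<Longrightarrow> (y, x) \<in> \<theta>"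
  unfolding congruence_def equiv_def by (blast dest: symD)

lemma congruence_trans: "congruence ar A \<theta> \<Longrightarrow> (x, y) \<in> \<theta> \<Longrightarrow> (y, z) \<in> \<theta> \<Longrightarrow> (x, z) \<in> \<theta>"
  unfolding congruence_def equiv_def by (blast dest: transD)

lemma congruence_Int:
  assumes "congruence ar A \<alpha>" "congruence ar A \<gamma>"
  shows "congruence ar A (\<alpha> \<inter> \<gamma>)"
  unfolding congruence_def
proof (intro conjI allI impI)
  show "equiv (carrier A) (\<alpha> \<inter> \<gamma>)"
    using assms[THEN congruence_equiv] refl_on_Int[of "carrier A" \<alpha> "carrier A" \<gamma>]
    by (simp add: equiv_def sym_Int trans_Int) blast
next
  fix f xs ys
  assume "length xs = ar f \<and> length ys = ar f \<and> set xs \<subseteq> carrier A \<and> set ys \<subseteq> carrier A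
    \<and> list_all2 (\<lambda>x y. (x, y) \<in> \<alpha> \<inter> \<gamma>) xs ys"
  moreover from this have "list_all2 (\<lambda>x y. (x, y) \<in> \<alpha>) xs ys" "list_all2 (\<lambda>x y. (x, y) \<in> \<gamma>) xs ys"
    by (auto elim: list_all2_mono)
  ultimately show "(ops A f xs, ops A f ys) \<in> \<alpha> \<inter> \<gamma>"
    using assms unfolding congruence_def by blast
qed

lemma alg_mk_modular_1_2: "alg_mk_modular ar 1 2 A"
  unfolding alg_mk_modular_def
proof (intro allI impI subsetI)
  fix \<alpha> \<beta> \<gamma> xy
  assume cong: "congruence ar A \<alpha> \<and> congruence ar A \<beta> \<and> congruence ar A \<gamma>"
    and xy: "xy \<in> \<alpha> \<inter> comp_alt \<beta> (\<alpha> \<inter> \<gamma>) 1"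
  obtain x y where [simp]: "xy = (x, y)" by fastforce
  have "y \<in> carrier A" using cong xy congruence_carrier by fastforce
  then have "(y, y) \<in> \<alpha> \<inter> \<gamma>" using cong congruence_refl by fastforce
  with xy show "xy \<in> comp_alt (\<alpha> \<inter> \<beta>) (\<alpha> \<inter> \<gamma>) 2"
    by (auto simp: numeral_2_eq_2)
qed

text \<open>
  A chain x witnessing (x 0, x (4g+3)) \<in> \<alpha> \<inter> (\<beta> o[4g+3] \<gamma>); here \<gamma> stands for the
  relation \<alpha> \<inter> \<gamma> of the modularity condition, whence \<gamma> \<subseteq> \<alpha>.
\<close>

locale congruence_walk =
  fixes ar :: "'f \<Rightarrow> nat" and A :: "('f, 'a) alg"
    and \<alpha> \<beta> \<gamma> :: "'a rel" and g :: nat and x :: "nat \<Rightarrow> 'a"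
  assumes cong_\<alpha>: "congruence ar A \<alpha>" and cong_\<beta>: "congruence ar A \<beta>"
    and cong_\<gamma>: "congruence ar A \<gamma>" and \<gamma>_subset_\<alpha>: "\<gamma> \<subseteq> \<alpha>"
    and walk: "alt_walk \<beta> \<gamma> (4*g+3) x"
    and ends_\<alpha>: "(x 0, x (4*g+3)) \<in> \<alpha>"
begin

lemma cong_alt_rel: "congruence ar A (alt_rel \<beta> \<gamma> k)"
  using cong_\<beta> cong_\<gamma> by (simp add: alt_rel_def)

lemma cong_\<alpha>\<beta>: "congruence ar A (\<alpha> \<inter> \<beta>)"
  using cong_\<alpha> cong_\<beta> by (rule congruence_Int)

lemma walk_step: "k < 4*g+3 \<Longrightarrow> (x k, x (Suc k)) \<in> alt_rel \<beta> \<gamma> k"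
  using walk by (simp add: alt_walk_def)

lemma x_carrier: "k \<le> 4*g+3 \<Longrightarrow> x k \<in> carrier A"
  using congruence_carrier[OF cong_alt_rel walk_step] congruence_carrier[OF cong_\<alpha> ends_\<alpha>]
  by (cases "k = 4*g+3") auto

lemma reverse_walk: "alt_walk \<beta> \<gamma> (4*g+3) (\<lambda>s. x (4*g+3 - s))"
  using walk cong_\<beta> cong_\<gamma>
  by (intro alt_walk_reverse) (auto simp: congruence_def equiv_def)

lemma apply_mk_modular:
  assumes "alg_mk_modular ar m w A" "(u, v) \<in> \<alpha>" "(u, v) \<in> comp_alt \<beta> \<gamma> m"
  shows "(u, v) \<in> comp_alt (\<alpha> \<inter> \<beta>) \<gamma> w"
proof -
  have "\<alpha> \<inter> comp_alt \<beta> (\<alpha> \<inter> \<gamma>) m \<subseteq> comp_alt (\<alpha> \<inter> \<beta>) (\<alpha> \<inter> \<gamma>) w"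
    using assms(1) cong_\<alpha> cong_\<beta> cong_\<gamma> unfolding alg_mk_modular_def by blast
  moreover have "\<alpha> \<inter> \<gamma> = \<gamma>" using \<gamma>_subset_\<alpha> by blast
  ultimately show ?thesis
    using assms(2,3) by auto
qed

end

section \<open>Local Day operations\<close>

locale day_operations =
  fixes ar :: "'f \<Rightarrow> nat" and A :: "('f, 'a) alg" and r :: nat
    and M :: "nat \<Rightarrow> 'a \<Rightarrow> 'a \<Rightarrow> 'a \<Rightarrow> 'a \<Rightarrow> 'a"
  assumes M_compatible: "\<And>i \<theta> a a' b b' c c' d d'. i \<le> 2*r \<Longrightarrow> congruence ar A \<theta> \<Longrightarrow>
      (a, a') \<in> \<theta> \<Longrightarrow> (b, b') \<in> \<theta> \<Longrightarrow> (c, c') \<in> \<theta> \<Longrightarrow> (d, d') \<in> \<theta> \<Longrightarrow>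
      (M i a b c d, M i a' b' c' d') \<in> \<theta>"
    and M_first: "\<And>a b c d. a \<in> carrier A \<Longrightarrow> b \<in> carrier A \<Longrightarrow> c \<in> carrier A \<Longrightarrow> d \<in> carrier A \<Longrightarrow>
      M 0 a b c d = a"
    and M_last: "\<And>a b c d. a \<in> carrier A \<Longrightarrow> b \<in> carrier A \<Longrightarrow> c \<in> carrier A \<Longrightarrow> d \<in> carrier A \<Longrightarrow>
      M (2*r) a b c d = d"
    and M_xyyx: "\<And>i a b. i < 2*r \<Longrightarrow> a \<in> carrier A \<Longrightarrow> b \<in> carrier A \<Longrightarrow>
      M i a b b a = M (Suc i) a b b a"
    and M_xxzz: "\<And>i a c. i < 2*r \<Longrightarrow> even i \<Longrightarrow> a \<in> carrier A \<Longrightarrow> c \<in> carrier A \<Longrightarrow>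
      M i a a c c = M (Suc i) a a c c"
    and M_xyyu: "\<And>i a b d. i < 2*r \<Longrightarrow> odd i \<Longrightarrow> a \<in> carrier A \<Longrightarrow> b \<in> carrier A \<Longrightarrow> d \<in> carrier A \<Longrightarrow>
      M i a b b d = M (Suc i) a b b d"

locale day_walk = day_operations ar A r M + congruence_walk ar A \<alpha> \<beta> \<gamma> g x
  for ar :: "'f \<Rightarrow> nat" and A r M \<alpha> \<beta> \<gamma> g x
begin

definition point :: "nat \<Rightarrow> 'a" where
  "point i = M i (x 0) (x (2*g+1)) (x (2*g+2)) (x (4*g+3))"

lemma point_0: "point 0 = x 0"
  unfolding point_def by (rule M_first) (auto intro: x_carrier)

lemma point_2r: "point (2*r) = x (4*g+3)"
  unfolding point_def by (rule M_last) (auto intro: x_carrier)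

text \<open>
  The four arguments walk inwards from both ends of the two halves of the chain and meet pairwise
  after g+1 steps.
\<close>

lemma point_to_middle:
  assumes "i \<le> 2*r"
  shows "(point i, M i (x (g+1)) (x (g+1)) (x (3*g+2)) (x (3*g+2))) \<in> comp_alt \<beta> \<gamma> (Suc g)"
proof -
  define y where "y = (\<lambda>s. x (4*g+3 - s))"
  have y_walk: "alt_walk \<beta> \<gamma> (4*g+3) y"
    using reverse_walk by (simp add: y_def)
  have "4*g+3 = (2*g+2) + (2*g+1)" by simp
  then have shifted: "alt_walk \<beta> \<gamma> (2*g+2 + (2*g+1)) y" "alt_walk \<beta> \<gamma> (2*g+2 + (2*g+1)) x"
    using y_walk walk by (simp_all only:)
  have "alt_walk \<beta> \<gamma> (2*g+1) (\<lambda>s. y (2*g+2 + s))" "alt_walk \<beta> \<gamma> (2*g+1) (\<lambda>s. x (2*g+2 + s))"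
    using alt_walk_shift[OF shifted(1)] alt_walk_shift[OF shifted(2)] by simp_all
  then have "alt_walk \<beta> \<gamma> g (\<lambda>s. y (2*g+2 + s))" "alt_walk \<beta> \<gamma> g (\<lambda>s. x (2*g+2 + s))"
    by (simp_all add: alt_walk_le)
  moreover have "alt_walk \<beta> \<gamma> g x" "alt_walk \<beta> \<gamma> g y"
    using walk y_walk by (auto intro: alt_walk_le)
  ultimately have "alt_walk \<beta> \<gamma> g (\<lambda>s. M i (x s) (y (2*g+2 + s)) (x (2*g+2 + s)) (y s))"
    using M_compatible[OF assms cong_alt_rel] by (simp add: alt_walk_def)
  then have "(point i, M i (x g) (x (g+1)) (x (3*g+2)) (x (3*g+3))) \<in> comp_alt \<beta> \<gamma> g"
    unfolding comp_alt_iff_alt_walk point_def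
    by (intro exI[of _ "\<lambda>s. M i (x s) (y (2*g+2 + s)) (x (2*g+2 + s)) (y s)"])
      (simp add: y_def numeral_3_eq_3)
  moreover have "(M i (x g) (x (g+1)) (x (3*g+2)) (x (3*g+3)),
      M i (x (g+1)) (x (g+1)) (x (3*g+2)) (x (3*g+2))) \<in> alt_rel \<beta> \<gamma> g"
  proof (rule M_compatible[OF assms cong_alt_rel])
    show "(x g, x (g+1)) \<in> alt_rel \<beta> \<gamma> g" using walk_step[of g] by simp
    show "(x (3*g+3), x (3*g+2)) \<in> alt_rel \<beta> \<gamma> g"
      using y_walk[unfolded alt_walk_def, rule_format, of g] by (simp add: y_def algebra_simps)
  qed (intro congruence_refl[OF cong_alt_rel] x_carrier; simp)+
  ultimately show ?thesis
    unfolding comp_alt_Suc_right by blast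
qed

lemma point_step_even:
  assumes "i < 2*r" "even i"
  shows "(point i, point (Suc i)) \<in> comp_alt \<beta> \<gamma> (Suc (2*g))"
proof -
  let ?mid = "\<lambda>i. M i (x (g+1)) (x (g+1)) (x (3*g+2)) (x (3*g+2))"
  have "?mid i = ?mid (Suc i)"
    using assms by (intro M_xxzz) (auto intro: x_carrier)
  then have "(point i, point (Suc i)) \<in> comp_alt \<beta> \<gamma> (Suc g) O (comp_alt \<beta> \<gamma> (Suc g))\<inverse>"
    using point_to_middle[of i] point_to_middle[of "Suc i"] assms by auto
  moreover have "sym \<beta>" "sym \<gamma>" "trans \<beta>" "trans \<gamma>"
    using cong_\<beta> cong_\<gamma> by (auto simp: congruence_def equiv_def)
  ultimately show ?thesis
    using comp_alt_O_converse by blast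
qed

lemma point_step_\<alpha>:
  assumes "i < 2*r"
  shows "(point i, point (Suc i)) \<in> \<alpha>"
proof -
  let ?a = "x 0" and ?b = "x (2*g+1)" and ?c = "x (2*g+2)" and ?d = "x (4*g+3)"
  have "(?b, ?c) \<in> \<gamma>" using walk_step[of "2*g+1"] by (simp add: alt_rel_def)
  then have "(?c, ?b) \<in> \<alpha>" using \<gamma>_subset_\<alpha> congruence_sym[OF cong_\<alpha>] by blast
  moreover have "(?d, ?a) \<in> \<alpha>" using congruence_sym[OF cong_\<alpha> ends_\<alpha>] .
  ultimately have "(point j, M j ?a ?b ?b ?a) \<in> \<alpha>" if "j \<le> 2*r" for j
    unfolding point_def using that
    by (intro M_compatible[OF _ cong_\<alpha>] congruence_refl[OF cong_\<alpha>] x_carrier) auto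
  moreover have "M i ?a ?b ?b ?a = M (Suc i) ?a ?b ?b ?a"
    using assms by (intro M_xyyx) (auto intro: x_carrier)
  ultimately show ?thesis
    using assms congruence_sym[OF cong_\<alpha>] congruence_trans[OF cong_\<alpha>]
    by (metis Suc_leI less_imp_le)
qed

lemma point_step_odd:
  assumes "i < 2*r" "odd i"
  shows "(point i, point (Suc i)) \<in> \<gamma>"
proof -
  let ?a = "x 0" and ?b = "x (2*g+1)" and ?c = "x (2*g+2)" and ?d = "x (4*g+3)"
  have "(?c, ?b) \<in> \<gamma>"
    using walk_step[of "2*g+1"] congruence_sym[OF cong_\<gamma>] by (simp add: alt_rel_def)
  then have "(point j, M j ?a ?b ?b ?d) \<in> \<gamma>" if "j \<le> 2*r" for j
    unfolding point_def using that
    by (intro M_compatible[OF _ cong_\<gamma>] congruence_refl[OF cong_\<gamma>] x_carrier) auto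
  moreover have "M i ?a ?b ?b ?d = M (Suc i) ?a ?b ?b ?d"
    using assms by (intro M_xyyu) (auto intro: x_carrier)
  ultimately show ?thesis
    using assms congruence_sym[OF cong_\<gamma>] congruence_trans[OF cong_\<gamma>]
    by (metis Suc_leI less_imp_le)
qed

end

context day_operations
begin

theorem alg_mk_modular_day_step:
  assumes modular: "alg_mk_modular ar (2*g+1) w A" and "even w" "w \<noteq> 0"
  shows "alg_mk_modular ar (4*g+3) (r * w) A"
  unfolding alg_mk_modular_def
proof (intro allI impI subsetI)
  fix \<alpha> \<beta> \<gamma> p
  assume cong: "congruence ar A \<alpha> \<and> congruence ar A \<beta> \<and> congruence ar A \<gamma>"
    and p: "p \<in> \<alpha> \<inter> comp_alt \<beta> (\<alpha> \<inter> \<gamma>) (4*g+3)"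
  obtain x where x: "p = (x 0, x (4*g+3))" "alt_walk \<beta> (\<alpha> \<inter> \<gamma>) (4*g+3) x"
    using p by (metis IntD2 comp_alt_iff_alt_walk prod.collapse)
  interpret day_walk ar A r M \<alpha> \<beta> "\<alpha> \<inter> \<gamma>" g x
    using cong congruence_Int x p by unfold_locales auto
  have "\<forall>i<r. (point (2*i), point (Suc (2*i))) \<in> comp_alt (\<alpha> \<inter> \<beta>) (\<alpha> \<inter> \<gamma>) w"
    using apply_mk_modular[OF modular] point_step_\<alpha> point_step_even by simp
  moreover have "\<forall>i<r. (point (Suc (2*i)), point (Suc (Suc (2*i)))) \<in> \<alpha> \<inter> \<gamma>"
    using point_step_odd by simp
  moreover have "trans (\<alpha> \<inter> \<gamma>)"
    using cong_\<gamma> by (simp add: congruence_def equiv_def)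
  ultimately have "(point 0, point (2*r)) \<in> comp_alt (\<alpha> \<inter> \<beta>) (\<alpha> \<inter> \<gamma>) (r * w)"
    using comp_alt_concat_even assms(2,3) by blast
  then show "p \<in> comp_alt (\<alpha> \<inter> \<beta>) (\<alpha> \<inter> \<gamma>) (r * w)"
    using point_0 point_2r x(1) by simp
qed

lemma alg_mk_modular_day_iterate:
  assumes "r \<ge> 1"
  shows "alg_mk_modular ar (2^(k+1) - 1) (2 * r^k) A"
proof (induction k)
  case 0
  then show ?case using alg_mk_modular_1_2[of ar A] by simp
next
  case (Suc k)
  define g :: nat where "g = 2^k - 1"
  obtain m where "(2::nat)^k = Suc m" using not0_implies_Suc by fastforce
  then have "2^(k+1) - 1 = 2*g+1" "2^(Suc k + 1) - 1 = 4*g+3"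
    unfolding g_def by simp_all
  moreover have "even (2 * r^k)" "2 * r^k \<noteq> 0" using assms by simp_all
  ultimately have "alg_mk_modular ar (2^(Suc k + 1) - 1) (r * (2 * r^k)) A"
    using alg_mk_modular_day_step Suc.IH by simp
  then show ?case by (simp add: algebra_simps)
qed

end

section \<open>Local Gumm operations\<close>

locale gumm_operations =
  fixes ar :: "'f \<Rightarrow> nat" and A :: "('f, 'a) alg" and n :: nat
    and P :: "'a \<Rightarrow> 'a \<Rightarrow> 'a \<Rightarrow> 'a" and J :: "nat \<Rightarrow> 'a \<Rightarrow> 'a \<Rightarrow> 'a \<Rightarrow> 'a"
  assumes P_compatible: "\<And>\<theta> a a' b b' c c'. congruence ar A \<theta> \<Longrightarrow>
      (a, a') \<in> \<theta> \<Longrightarrow> (b, b') \<in> \<theta> \<Longrightarrow> (c, c') \<in> \<theta> \<Longrightarrow> (P a b c, P a' b' c') \<in> \<theta>"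
    and J_compatible: "\<And>i \<theta> a a' b b' c c'. 1 \<le> i \<Longrightarrow> i \<le> n+1 \<Longrightarrow> congruence ar A \<theta> \<Longrightarrow>
      (a, a') \<in> \<theta> \<Longrightarrow> (b, b') \<in> \<theta> \<Longrightarrow> (c, c') \<in> \<theta> \<Longrightarrow> (J i a b c, J i a' b' c') \<in> \<theta>"
    and J_xyx: "\<And>i a b. 1 \<le> i \<Longrightarrow> i \<le> n+1 \<Longrightarrow> a \<in> carrier A \<Longrightarrow> b \<in> carrier A \<Longrightarrow> J i a b a = a"
    and P_xzz: "\<And>a c. a \<in> carrier A \<Longrightarrow> c \<in> carrier A \<Longrightarrow> P a c c = a"
    and P_xxz: "\<And>a c. a \<in> carrier A \<Longrightarrow> c \<in> carrier A \<Longrightarrow> P a a c = J 1 a a c"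
    and J_xzz: "\<And>i a c. 1 \<le> i \<Longrightarrow> i \<le> n \<Longrightarrow> odd i \<Longrightarrow> a \<in> carrier A \<Longrightarrow> c \<in> carrier A \<Longrightarrow>
      J i a c c = J (Suc i) a c c"
    and J_xxz: "\<And>i a c. 1 \<le> i \<Longrightarrow> i \<le> n \<Longrightarrow> even i \<Longrightarrow> a \<in> carrier A \<Longrightarrow> c \<in> carrier A \<Longrightarrow>
      J i a a c = J (Suc i) a a c"
    and J_last: "\<And>a b c. a \<in> carrier A \<Longrightarrow> b \<in> carrier A \<Longrightarrow> c \<in> carrier A \<Longrightarrow> J (n+1) a b c = c"

locale gumm_walk = gumm_operations ar A n P J + congruence_walk ar A \<alpha> \<beta> \<gamma> g x
  for ar :: "'f \<Rightarrow> nat" and A n P J \<alpha> \<beta> \<gamma> g x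
begin

lemma sym_trans_congruences: "sym \<beta>" "sym \<gamma>" "sym (\<alpha> \<inter> \<beta>)" "trans \<gamma>" "trans (\<alpha> \<inter> \<beta>)"
  using cong_\<beta> cong_\<gamma> cong_\<alpha>\<beta> by (auto simp: congruence_def equiv_def)

lemma P_to_start_\<alpha>: "(P (x 0) (x 0) (x (4*g+3)), x 0) \<in> \<alpha>"
proof -
  let ?a = "x 0" and ?d = "x (4*g+3)"
  have carrier: "?a \<in> carrier A" "?d \<in> carrier A"
    by (simp_all add: x_carrier)
  have "(J 1 ?a ?a ?d, J 1 ?a ?a ?a) \<in> \<alpha>"
    using congruence_sym[OF cong_\<alpha> ends_\<alpha>]
    by (intro J_compatible[OF _ _ cong_\<alpha>] congruence_refl[OF cong_\<alpha>] carrier) auto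
  then show ?thesis using P_xxz J_xyx carrier by simp
qed

lemma start_to_P:
  assumes "alg_mk_modular ar (2*g+1) w A" "even w" "w \<noteq> 0"
  shows "(x 0, P (x 0) (x 0) (x (4*g+3))) \<in> comp_alt \<gamma> (\<alpha> \<inter> \<beta>) w"
proof -
  let ?a = "x 0" and ?b = "x (2*g+1)" and ?c = "x (2*g+2)" and ?d = "x (4*g+3)"
  have carrier: "?a \<in> carrier A" "?b \<in> carrier A" "?d \<in> carrier A"
    by (simp_all add: x_carrier)
  have "alt_walk \<beta> \<gamma> (2*g+1) (\<lambda>s. P ?a (x s) (x (4*g+3 - s)))"
    unfolding alt_walk_def
  proof (intro allI impI)
    fix s assume "s < 2*g+1"
    then have "s < 4*g+3" by simp
    then show "(P ?a (x s) (x (4*g+3 - s)), P ?a (x (Suc s)) (x (4*g+3 - Suc s))) \<in> alt_rel \<beta> \<gamma> s"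
      using walk reverse_walk unfolding alt_walk_def
      by (intro P_compatible[OF cong_alt_rel] congruence_refl[OF cong_alt_rel] carrier) auto
  qed
  then have walk_P: "(P ?a ?a ?d, P ?a ?b ?c) \<in> comp_alt \<beta> \<gamma> (2*g+1)"
    unfolding comp_alt_iff_alt_walk
    by (intro exI[of _ "\<lambda>s. P ?a (x s) (x (4*g+3 - s))"]) (simp add: numeral_3_eq_3)
  have P_\<gamma>: "(P ?a ?b ?c, ?a) \<in> \<gamma>"
  proof -
    have "(?c, ?b) \<in> \<gamma>"
      using walk_step[of "2*g+1"] congruence_sym[OF cong_\<gamma>] by (simp add: alt_rel_def)
    then have "(P ?a ?b ?c, P ?a ?b ?b) \<in> \<gamma>"
      by (intro P_compatible[OF cong_\<gamma>] congruence_refl[OF cong_\<gamma>] carrier)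
    then show ?thesis using P_xzz carrier by simp
  qed
  have "(P ?a ?a ?d, P ?a ?b ?c) \<in> \<alpha>"
    using P_to_start_\<alpha> P_\<gamma> \<gamma>_subset_\<alpha> congruence_sym[OF cong_\<alpha>] congruence_trans[OF cong_\<alpha>] by blast
  then have "(P ?a ?a ?d, P ?a ?b ?c) \<in> comp_alt (\<alpha> \<inter> \<beta>) \<gamma> w"
    using apply_mk_modular[OF assms(1)] walk_P by blast
  moreover obtain m where m: "w = Suc m" "odd m"
    using assms(2,3) by (cases w) auto
  moreover have "comp_alt (\<alpha> \<inter> \<beta>) \<gamma> (Suc m) O \<gamma> \<subseteq> comp_alt (\<alpha> \<inter> \<beta>) \<gamma> (Suc m)"
    using comp_alt_O_last[of "\<alpha> \<inter> \<beta>" \<gamma> m] sym_trans_congruences m(2) by (simp add: alt_rel_def)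
  ultimately have "(P ?a ?a ?d, ?a) \<in> comp_alt (\<alpha> \<inter> \<beta>) \<gamma> w"
    using P_\<gamma> by blast
  then show ?thesis
    using converse_comp_alt_even[of "\<alpha> \<inter> \<beta>" \<gamma> w] sym_trans_congruences assms(2) by auto
qed

lemma J_link:
  assumes "1 \<le> i" "i \<le> n"
  shows "(J i (x 0) (x 0) (x (4*g+3)), J i (x 0) (x (4*g+3)) (x (4*g+3)))
    \<in> comp_alt (\<alpha> \<inter> \<beta>) \<gamma> (4*g+3)"
proof -
  let ?a = "x 0" and ?d = "x (4*g+3)"
  define y where "y = (\<lambda>s. J i ?a (x s) ?d)"
  have "(y s, ?a) \<in> \<alpha>" if "s \<le> 4*g+3" for s
  proof -
    have "(y s, J i ?a (x s) ?a) \<in> \<alpha>"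
      unfolding y_def using assms that congruence_sym[OF cong_\<alpha> ends_\<alpha>]
      by (intro J_compatible[OF _ _ cong_\<alpha>] congruence_refl[OF cong_\<alpha>] x_carrier) auto
    then show ?thesis using J_xyx assms that x_carrier by simp
  qed
  then have step_\<alpha>: "(y s, y (Suc s)) \<in> \<alpha>" if "s < 4*g+3" for s
    using that congruence_sym[OF cong_\<alpha>] congruence_trans[OF cong_\<alpha>] by (meson Suc_leI less_imp_le)
  have "alt_walk (\<alpha> \<inter> \<beta>) \<gamma> (4*g+3) y"
    unfolding alt_walk_def
  proof (intro allI impI)
    fix s assume s: "s < 4*g+3"
    have "(y s, y (Suc s)) \<in> alt_rel \<beta> \<gamma> s"
      unfolding y_def using assms walk_step[OF s]
      by (intro J_compatible[OF _ _ cong_alt_rel] congruence_refl[OF cong_alt_rel] x_carrier) auto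
    then show "(y s, y (Suc s)) \<in> alt_rel (\<alpha> \<inter> \<beta>) \<gamma> s"
      using step_\<alpha>[OF s] by (simp add: alt_rel_def split: if_splits)
  qed
  then show ?thesis
    unfolding comp_alt_iff_alt_walk by (intro exI[of _ y]) (simp add: y_def)
qed

lemma P_to_end:
  "(P (x 0) (x 0) (x (4*g+3)), x (4*g+3)) \<in> comp_alt (\<alpha> \<inter> \<beta>) \<gamma> (Suc (2*(2*g+1)*n))"
proof -
  let ?a = "x 0" and ?d = "x (4*g+3)"
  have carrier: "?a \<in> carrier A" "?d \<in> carrier A"
    by (simp_all add: x_carrier)
  define v where "v k = (if even k then J (Suc k) ?a ?a ?d else J (Suc k) ?a ?d ?d)" for k
  have "(v k, v (Suc k)) \<in> comp_alt (\<alpha> \<inter> \<beta>) \<gamma> (4*g+3)" if "k < n" for k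
  proof (cases "even k")
    case True
    then have "v (Suc k) = J (Suc k) ?a ?d ?d"
      using J_xzz[of "Suc k"] that carrier by (simp add: v_def)
    then show ?thesis
      using J_link[of "Suc k"] that True by (simp add: v_def)
  next
    case False
    then have "v (Suc k) = J (Suc k) ?a ?a ?d"
      using J_xxz[of "Suc k"] that carrier by (simp add: v_def)
    moreover have "(comp_alt (\<alpha> \<inter> \<beta>) \<gamma> (4*g+3))\<inverse> = comp_alt (\<alpha> \<inter> \<beta>) \<gamma> (4*g+3)"
      using sym_trans_congruences by (simp add: converse_comp_alt_odd)
    ultimately show ?thesis
      using J_link[of "Suc k"] that False by (auto simp: v_def)
  qed
  moreover have "v 0 = P ?a ?a ?d" "v n = ?d"
    using P_xxz J_last carrier by (simp_all add: v_def)
  moreover have "(v 0, v 0) \<in> \<alpha> \<inter> \<beta>"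
    using congruence_refl[OF cong_\<alpha>\<beta>] congruence_carrier[OF cong_\<alpha> P_to_start_\<alpha>] \<open>v 0 = P ?a ?a ?d\<close>
    by simp
  moreover have "4*g+3 = Suc (2*(2*g+1))" by simp
  ultimately show ?thesis
    using comp_alt_concat_odd[of "\<alpha> \<inter> \<beta>" v n \<gamma> "2*g+1"] sym_trans_congruences by metis
qed

lemma start_to_end:
  assumes "alg_mk_modular ar (2*g+1) w A" "even w" "w \<noteq> 0"
  shows "(x 0, x (4*g+3)) \<in> comp_alt \<gamma> (\<alpha> \<inter> \<beta>) (w + 2*(2*g+1)*n)"
proof -
  obtain m where m: "w = Suc m" "odd m"
    using assms(2,3) by (cases w) auto
  then have "trans (alt_rel \<gamma> (\<alpha> \<inter> \<beta>) m)"
    using sym_trans_congruences by (simp add: alt_rel_def)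
  from comp_alt_merge[OF this, of "2*(2*g+1)*n"] m(2)
  have "comp_alt \<gamma> (\<alpha> \<inter> \<beta>) w O comp_alt (\<alpha> \<inter> \<beta>) \<gamma> (Suc (2*(2*g+1)*n))
      \<subseteq> comp_alt \<gamma> (\<alpha> \<inter> \<beta>) (w + 2*(2*g+1)*n)"
    by (simp add: m(1) alt_rel_def)
  then show ?thesis
    using start_to_P[OF assms] P_to_end by blast
qed

end

context gumm_operations
begin

text \<open>
  The chain is traversed from d to a: the Gumm argument produces a chain starting with \<alpha> \<inter> \<gamma>,
  which becomes one starting with \<alpha> \<inter> \<beta> when reversed.
\<close>

theorem alg_mk_modular_gumm_step:
  assumes modular: "alg_mk_modular ar (2*g+1) w A" and "even w" "w \<noteq> 0"
  shows "alg_mk_modular ar (4*g+3) (w + 2*(2*g+1)*n) A"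
  unfolding alg_mk_modular_def
proof (intro allI impI subsetI)
  fix \<alpha> \<beta> \<gamma> p
  assume cong: "congruence ar A \<alpha> \<and> congruence ar A \<beta> \<and> congruence ar A \<gamma>"
    and p: "p \<in> \<alpha> \<inter> comp_alt \<beta> (\<alpha> \<inter> \<gamma>) (4*g+3)"
  have sym: "sym \<beta>" "sym (\<alpha> \<inter> \<gamma>)" "sym (\<alpha> \<inter> \<beta>)" "sym \<alpha>"
    using cong congruence_Int by (auto simp: congruence_def equiv_def)
  obtain a d where p_eq: "p = (a, d)" by fastforce
  have "(d, a) \<in> comp_alt \<beta> (\<alpha> \<inter> \<gamma>) (4*g+3)"
    using p sym converse_comp_alt_odd[of \<beta> "\<alpha> \<inter> \<gamma>" "4*g+3"] by (auto simp: p_eq)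
  then obtain x where x: "x 0 = d" "x (4*g+3) = a" "alt_walk \<beta> (\<alpha> \<inter> \<gamma>) (4*g+3) x"
    unfolding comp_alt_iff_alt_walk by blast
  have "(x 0, x (4*g+3)) \<in> \<alpha>"
    using p sym(4) x by (auto simp: p_eq dest: symD)
  interpret gumm_walk ar A n P J \<alpha> \<beta> "\<alpha> \<inter> \<gamma>" g x
    using cong congruence_Int x \<open>(x 0, x (4*g+3)) \<in> \<alpha>\<close> by unfold_locales auto
  have "(x 0, x (4*g+3)) \<in> comp_alt (\<alpha> \<inter> \<gamma>) (\<alpha> \<inter> \<beta>) (w + 2*(2*g+1)*n)"
    by (rule start_to_end[OF assms])
  moreover have "even (w + 2*(2*g+1)*n)" using assms(2) by simp
  ultimately show "p \<in> comp_alt (\<alpha> \<inter> \<beta>) (\<alpha> \<inter> \<gamma>) (w + 2*(2*g+1)*n)"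
    using x p_eq sym converse_comp_alt_even[of "\<alpha> \<inter> \<gamma>" "\<alpha> \<inter> \<beta>"] by blast
qed

lemma alg_mk_modular_gumm_iterate:
  assumes "alg_mk_modular ar (2^(q+1) - 1) W A" "even W" "W \<noteq> 0"
  shows "alg_mk_modular ar (2^(j+q+1) - 1) (W + 2*n*(\<Sum>i<j. 2^(i+q+1) - 1)) A"
proof (induction j)
  case 0
  then show ?case using assms(1) by simp
next
  case (Suc j)
  let ?W = "W + 2*n*(\<Sum>i<j. 2^(i+q+1) - 1)"
  define g :: nat where "g = 2^(j+q) - 1"
  obtain m where "(2::nat)^(j+q) = Suc m" using not0_implies_Suc by fastforce
  then have g: "2^(j+q+1) - 1 = 2*g+1" "2^(Suc j+q+1) - 1 = 4*g+3"
    unfolding g_def by simp_all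
  have "alg_mk_modular ar (2*g+1) ?W A"
    using Suc.IH unfolding g(1) .
  then have "alg_mk_modular ar (4*g+3) (?W + 2*(2*g+1)*n) A"
    by (rule alg_mk_modular_gumm_step) (use assms(2,3) in simp_all)
  moreover have "?W + 2*(2*g+1)*n = W + 2*n*(\<Sum>i<Suc j. 2^(i+q+1) - 1)"
    by (simp only: sum.lessThan_Suc g(1)) (simp add: algebra_simps)
  ultimately show ?case
    unfolding g(2) by (simp only:)
qed

end

section \<open>Equational logic and the free algebra\<close>

type_synonym 'f identities = "(('f, nat) trm \<times> ('f, nat) trm) set"

definition wf_subst :: "('f \<Rightarrow> nat) \<Rightarrow> ('v \<Rightarrow> ('f, 'w) trm) \<Rightarrow> bool" where
  "wf_subst ar \<sigma> \<longleftrightarrow> (\<forall>v. wf_trm ar (\<sigma> v))"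

definition wf_eqs :: "('f \<Rightarrow> nat) \<Rightarrow> 'f identities \<Rightarrow> bool" where
  "wf_eqs ar \<Sigma> \<longleftrightarrow> (\<forall>(s, t)\<in>\<Sigma>. wf_trm ar s \<and> wf_trm ar t)"

lemma wf_trm_subst: "wf_trm ar t \<Longrightarrow> wf_subst ar \<sigma> \<Longrightarrow> wf_trm ar (subst \<sigma> t)"
  by (induction t) (auto simp: wf_subst_def)

lemma subst_subst: "subst \<sigma> (subst \<tau> t) = subst (\<lambda>v. subst \<sigma> (\<tau> v)) t"
  by (induction t) auto

lemma subst_Var: "subst Var t = t"
  by (induction t) (auto simp: map_idI)

lemma eval_subst: "eval A \<rho> (subst \<sigma> t) = eval A (\<lambda>v. eval A \<rho> (\<sigma> v)) t"
  by (induction t) (simp_all add: comp_def cong: map_cong)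

lemma eval_cong: "(\<forall>v\<in>vars_trm t. \<rho> v = \<rho>' v) \<Longrightarrow> eval A \<rho> t = eval A \<rho>' t"
  by (induction t) (simp_all cong: map_cong)

lemma eval_in_carrier:
  assumes "is_alg ar A" "\<forall>v. \<rho> v \<in> carrier A"
  shows "wf_trm ar t \<Longrightarrow> eval A \<rho> t \<in> carrier A"
proof (induction t)
  case (Var v)
  then show ?case using assms(2) by simp
next
  case (Fn f ts)
  then have "set (map (eval A \<rho>) ts) \<subseteq> carrier A" by auto
  then show ?case using Fn.prems assms(1) unfolding is_alg_def by simp
qed

lemma list_all2_mapI: "(\<And>x. x \<in> set xs \<Longrightarrow> P (f x) (g x)) \<Longrightarrow> list_all2 P (map f xs) (map g xs)"
  by (induction xs) auto

lemma eval_congruence: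
  assumes "congruence ar A \<theta>" "is_alg ar A"
    and "\<forall>v. \<rho> v \<in> carrier A" "\<forall>v. \<rho>' v \<in> carrier A" "\<forall>v. (\<rho> v, \<rho>' v) \<in> \<theta>"
  shows "wf_trm ar t \<Longrightarrow> (eval A \<rho> t, eval A \<rho>' t) \<in> \<theta>"
proof (induction t)
  case (Var v)
  then show ?case using assms(5) by simp
next
  case (Fn f ts)
  have "set (map (eval A \<rho>) ts) \<subseteq> carrier A" "set (map (eval A \<rho>') ts) \<subseteq> carrier A"
    using Fn.prems eval_in_carrier[OF assms(2,3)] eval_in_carrier[OF assms(2,4)] by auto
  moreover have "list_all2 (\<lambda>x y. (x, y) \<in> \<theta>) (map (eval A \<rho>) ts) (map (eval A \<rho>') ts)"
    by (rule list_all2_mapI) (use Fn in auto)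
  ultimately show ?case
    using assms(1) Fn.prems unfolding congruence_def by simp
qed

inductive derivable :: "('f \<Rightarrow> nat) \<Rightarrow> 'f identities \<Rightarrow> ('f, nat) trm \<Rightarrow> ('f, nat) trm \<Rightarrow> bool"
  for ar \<Sigma> where
  subst_eqn: "(s, t) \<in> \<Sigma> \<Longrightarrow> wf_subst ar \<sigma> \<Longrightarrow> derivable ar \<Sigma> (subst \<sigma> s) (subst \<sigma> t)"
| refl: "wf_trm ar t \<Longrightarrow> derivable ar \<Sigma> t t"
| sym: "derivable ar \<Sigma> s t \<Longrightarrow> derivable ar \<Sigma> t s"
| trans: "derivable ar \<Sigma> s t \<Longrightarrow> derivable ar \<Sigma> t u \<Longrightarrow> derivable ar \<Sigma> s u"
| cong: "length ss = ar f \<Longrightarrow> list_all2 (derivable ar \<Sigma>) ss ts \<Longrightarrow>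
    derivable ar \<Sigma> (Fn f ss) (Fn f ts)"

lemma derivable_wf: "derivable ar \<Sigma> s t \<Longrightarrow> wf_eqs ar \<Sigma> \<Longrightarrow> wf_trm ar s \<and> wf_trm ar t"
proof (induction rule: derivable.induct)
  case (subst_eqn s t \<sigma>)
  then show ?case using wf_trm_subst unfolding wf_eqs_def by fastforce
next
  case (cong ss f ts)
  have "length ts = length ss" using cong(2) by (simp add: list_all2_lengthD)
  moreover have "\<forall>x\<in>set ss. wf_trm ar x" "\<forall>x\<in>set ts. wf_trm ar x"
    using cong(2,3) by (auto simp: list_all2_conv_all_nth in_set_conv_nth)
  ultimately show ?case using cong(1) by simp
qed auto

lemma list_all2_map_eq: "list_all2 (\<lambda>x y. f x = g y) xs ys \<Longrightarrow> map f xs = map g ys"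
  by (induction rule: list_all2_induct) auto

lemma derivable_sound:
  assumes "models ar \<Sigma> A" "wf_eqs ar \<Sigma>"
  shows "derivable ar \<Sigma> s t \<Longrightarrow> \<forall>v. \<rho> v \<in> carrier A \<Longrightarrow> eval A \<rho> s = eval A \<rho> t"
proof (induction arbitrary: \<rho> rule: derivable.induct)
  case (subst_eqn s t \<sigma>)
  have "is_alg ar A" using assms(1) by (simp add: models_def)
  then have "\<forall>v. eval A \<rho> (\<sigma> v) \<in> carrier A"
    using eval_in_carrier subst_eqn(2,3) unfolding wf_subst_def by blast
  moreover have "satisfies A s t" using assms(1) subst_eqn(1) unfolding models_def by auto
  ultimately show ?case unfolding satisfies_def eval_subst by auto
next
  case (cong ss f ts)
  have "map (eval A \<rho>) ss = map (eval A \<rho>) ts"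
    by (rule list_all2_map_eq) (use cong(2,3) in \<open>auto elim: list_all2_mono\<close>)
  then show ?case by simp
qed auto

lemma derivable_subst:
  "derivable ar \<Sigma> s t \<Longrightarrow> wf_subst ar \<sigma> \<Longrightarrow> derivable ar \<Sigma> (subst \<sigma> s) (subst \<sigma> t)"
proof (induction rule: derivable.induct)
  case (subst_eqn s t \<tau>)
  then have "wf_subst ar (\<lambda>v. subst \<sigma> (\<tau> v))" using wf_trm_subst unfolding wf_subst_def by blast
  then show ?case using derivable.subst_eqn[OF subst_eqn(1)] by (simp add: subst_subst)
next
  case (refl t)
  then show ?case by (simp add: derivable.refl wf_trm_subst)
next
  case (sym s t)
  then show ?case by (simp add: derivable.sym)
next
  case (trans s t u)
  then show ?case by (meson derivable.trans)
next
  case (cong ss f ts)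
  have "list_all2 (derivable ar \<Sigma>) (map (subst \<sigma>) ss) (map (subst \<sigma>) ts)"
    using cong(2,3) by (auto simp: list_all2_map1 list_all2_map2 elim: list_all2_mono)
  then show ?case using cong(1) by (auto intro: derivable.cong)
qed

lemma derivable_subst_cong:
  "wf_trm ar t \<Longrightarrow> \<forall>v. derivable ar \<Sigma> (\<sigma> v) (\<tau> v) \<Longrightarrow> derivable ar \<Sigma> (subst \<sigma> t) (subst \<tau> t)"
proof (induction t)
  case (Var v)
  then show ?case by simp
next
  case (Fn f ts)
  have "list_all2 (derivable ar \<Sigma>) (map (subst \<sigma>) ts) (map (subst \<tau>) ts)"
    by (rule list_all2_mapI) (use Fn in auto)
  then show ?case using Fn.prems by (auto intro: derivable.cong)
qed

text \<open>
  The free algebra of the variety over the variables nat: its elements are representatives,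
  chosen by \<open>SOME\<close>, of the derivability classes of well-formed terms.
\<close>

definition canon :: "('f \<Rightarrow> nat) \<Rightarrow> 'f identities \<Rightarrow> ('f, nat) trm \<Rightarrow> ('f, nat) trm" where
  "canon ar \<Sigma> t = (SOME u. derivable ar \<Sigma> u t)"

definition free_alg :: "('f \<Rightarrow> nat) \<Rightarrow> 'f identities \<Rightarrow> ('f, ('f, nat) trm) alg" where
  "free_alg ar \<Sigma> =
     \<lparr>carrier = canon ar \<Sigma> ` {t. wf_trm ar t}, ops = (\<lambda>f xs. canon ar \<Sigma> (Fn f xs))\<rparr>"

lemma derivable_canon: "wf_trm ar t \<Longrightarrow> derivable ar \<Sigma> (canon ar \<Sigma> t) t"
  unfolding canon_def by (rule someI[of _ t]) (rule derivable.refl)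

lemma canon_eq: "derivable ar \<Sigma> s t \<Longrightarrow> canon ar \<Sigma> s = canon ar \<Sigma> t"
proof -
  assume "derivable ar \<Sigma> s t"
  then have "(\<lambda>u. derivable ar \<Sigma> u s) = (\<lambda>u. derivable ar \<Sigma> u t)"
    by (auto intro: derivable.trans derivable.sym)
  then show ?thesis unfolding canon_def by simp
qed

lemma canon_eq_iff:
  "wf_eqs ar \<Sigma> \<Longrightarrow> wf_trm ar s \<Longrightarrow> wf_trm ar t \<Longrightarrow>
    canon ar \<Sigma> s = canon ar \<Sigma> t \<longleftrightarrow> derivable ar \<Sigma> s t"
  by (metis derivable.sym derivable.trans canon_eq derivable_canon)

lemma free_alg_carrier_wf: "wf_eqs ar \<Sigma> \<Longrightarrow> x \<in> carrier (free_alg ar \<Sigma>) \<Longrightarrow> wf_trm ar x"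
  unfolding free_alg_def using derivable_canon derivable_wf by fastforce

lemma canon_free_alg_carrier:
  "wf_eqs ar \<Sigma> \<Longrightarrow> x \<in> carrier (free_alg ar \<Sigma>) \<Longrightarrow> canon ar \<Sigma> x = x"
  unfolding free_alg_def using derivable_canon canon_eq by fastforce

lemma canon_Var_in_free_alg: "canon ar \<Sigma> (Var v) \<in> carrier (free_alg ar \<Sigma>)"
  unfolding free_alg_def by auto

lemma is_alg_free_alg: "wf_eqs ar \<Sigma> \<Longrightarrow> is_alg ar (free_alg ar \<Sigma>)"
  unfolding is_alg_def
proof (intro conjI allI impI)
  show "carrier (free_alg ar \<Sigma>) \<noteq> {}"
    using canon_Var_in_free_alg by blast
next
  fix f xs assume "wf_eqs ar \<Sigma>" "length xs = ar f \<and> set xs \<subseteq> carrier (free_alg ar \<Sigma>)"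
  then have "wf_trm ar (Fn f xs)" using free_alg_carrier_wf by auto
  then show "ops (free_alg ar \<Sigma>) f xs \<in> carrier (free_alg ar \<Sigma>)" unfolding free_alg_def by auto
qed

lemma eval_free_alg:
  assumes "wf_eqs ar \<Sigma>" "\<forall>v. \<rho> v \<in> carrier (free_alg ar \<Sigma>)"
  shows "wf_trm ar t \<Longrightarrow> eval (free_alg ar \<Sigma>) \<rho> t = canon ar \<Sigma> (subst \<rho> t)"
proof (induction t)
  case (Var v)
  then show ?case using canon_free_alg_carrier[OF assms(1)] assms(2) by simp
next
  case (Fn f ts)
  let ?us = "map (\<lambda>t. canon ar \<Sigma> (subst \<rho> t)) ts"
  have "wf_subst ar \<rho>" using assms free_alg_carrier_wf unfolding wf_subst_def by blast
  then have "list_all2 (derivable ar \<Sigma>) ?us (map (subst \<rho>) ts)"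
    by (intro list_all2_mapI) (use Fn in \<open>auto intro: derivable_canon wf_trm_subst\<close>)
  then have "canon ar \<Sigma> (Fn f ?us) = canon ar \<Sigma> (Fn f (map (subst \<rho>) ts))"
    using Fn.prems by (intro canon_eq derivable.cong) auto
  moreover have m: "map (eval (free_alg ar \<Sigma>) \<rho>) ts = ?us"
    using Fn by auto
  moreover have "eval (free_alg ar \<Sigma>) \<rho> (Fn f ts)
      = canon ar \<Sigma> (Fn f (map (eval (free_alg ar \<Sigma>) \<rho>) ts))"
    by (simp add: free_alg_def)
  ultimately show ?case by (simp only: m subst.simps)
qed

lemma models_free_alg: "wf_eqs ar \<Sigma> \<Longrightarrow> models ar \<Sigma> (free_alg ar \<Sigma>)"
  unfolding models_def
proof (intro conjI ballI)
  assume wf: "wf_eqs ar \<Sigma>"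
  then show "is_alg ar (free_alg ar \<Sigma>)" by (rule is_alg_free_alg)
  fix st assume "st \<in> \<Sigma>"
  moreover obtain s t where st: "st = (s, t)" by fastforce
  ultimately have "(s, t) \<in> \<Sigma>" "wf_trm ar s" "wf_trm ar t" using wf unfolding wf_eqs_def by auto
  have "satisfies (free_alg ar \<Sigma>) s t"
    unfolding satisfies_def
  proof (intro allI impI)
    fix \<rho> :: "nat \<Rightarrow> (_, nat) trm" assume \<rho>: "\<forall>v. \<rho> v \<in> carrier (free_alg ar \<Sigma>)"
    then have "wf_subst ar \<rho>" using wf free_alg_carrier_wf unfolding wf_subst_def by blast
    then have "derivable ar \<Sigma> (subst \<rho> s) (subst \<rho> t)"
      by (rule derivable.subst_eqn[OF \<open>(s, t) \<in> \<Sigma>\<close>])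
    then show "eval (free_alg ar \<Sigma>) \<rho> s = eval (free_alg ar \<Sigma>) \<rho> t"
      using eval_free_alg[OF wf \<rho>] \<open>wf_trm ar s\<close> \<open>wf_trm ar t\<close> canon_eq by metis
  qed
  then show "case st of (s, t) \<Rightarrow> satisfies (free_alg ar \<Sigma>) s t" by (simp add: st)
qed

lemma derivable_if_satisfies_free_alg:
  assumes "wf_eqs ar \<Sigma>" "satisfies (free_alg ar \<Sigma>) s t" "wf_trm ar s" "wf_trm ar t"
  shows "derivable ar \<Sigma> s t"
proof -
  let ?\<rho> = "\<lambda>v. canon ar \<Sigma> (Var v)"
  have \<rho>: "\<forall>v. ?\<rho> v \<in> carrier (free_alg ar \<Sigma>)" using canon_Var_in_free_alg by blast
  then have "eval (free_alg ar \<Sigma>) ?\<rho> s = eval (free_alg ar \<Sigma>) ?\<rho> t"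
    using assms(2) by (simp add: satisfies_def)
  then have "canon ar \<Sigma> (subst ?\<rho> s) = canon ar \<Sigma> (subst ?\<rho> t)"
    using eval_free_alg[OF assms(1) \<rho>] assms(3,4) by simp
  moreover have "\<forall>v. derivable ar \<Sigma> (?\<rho> v) (Var v)" by (auto intro: derivable_canon)
  then have "derivable ar \<Sigma> (subst ?\<rho> s) s" "derivable ar \<Sigma> (subst ?\<rho> t) t"
    using derivable_subst_cong assms(3,4) subst_Var by metis+
  ultimately show ?thesis
    using canon_eq_iff[OF assms(1)] derivable_wf[OF _ assms(1)]
    by (meson derivable.sym derivable.trans)
qed

lemma holds_in_imp_satisfies:
  assumes "wf_eqs ar \<Sigma>" "holds_in TYPE(('f, nat) trm) ar \<Sigma> s t" "wf_trm ar s" "wf_trm ar t"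
    and "models ar \<Sigma> (A :: ('f, 'a) alg)"
  shows "satisfies A s t"
proof -
  have "satisfies (free_alg ar \<Sigma>) s t"
    using assms(2) models_free_alg[OF assms(1)] unfolding holds_in_def by blast
  then have "derivable ar \<Sigma> s t" using derivable_if_satisfies_free_alg assms(1,3,4) by blast
  then show ?thesis unfolding satisfies_def using derivable_sound[OF assms(5,1)] by blast
qed

definition subst_kernel :: "('f \<Rightarrow> nat) \<Rightarrow> 'f identities \<Rightarrow> (nat \<Rightarrow> ('f, nat) trm) \<Rightarrow> ('f, nat) trm rel"
  where "subst_kernel ar \<Sigma> \<sigma> = {(u, v). u \<in> carrier (free_alg ar \<Sigma>) \<and> v \<in> carrier (free_alg ar \<Sigma>)
    \<and> derivable ar \<Sigma> (subst \<sigma> u) (subst \<sigma> v)}"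

lemma congruence_subst_kernel:
  assumes wf: "wf_eqs ar \<Sigma>" and \<sigma>: "wf_subst ar \<sigma>"
  shows "congruence ar (free_alg ar \<Sigma>) (subst_kernel ar \<Sigma> \<sigma>)"
  unfolding congruence_def
proof (intro conjI allI impI)
  show "equiv (carrier (free_alg ar \<Sigma>)) (subst_kernel ar \<Sigma> \<sigma>)"
    unfolding equiv_def refl_on_def sym_def trans_def subst_kernel_def
    using free_alg_carrier_wf[OF wf] wf_trm_subst[OF _ \<sigma>]
    by (auto intro: derivable.refl derivable.sym derivable.trans)
next
  fix f xs ys
  assume a: "length xs = ar f \<and> length ys = ar f \<and> set xs \<subseteq> carrier (free_alg ar \<Sigma>)
    \<and> set ys \<subseteq> carrier (free_alg ar \<Sigma>) \<and> list_all2 (\<lambda>x y. (x, y) \<in> subst_kernel ar \<Sigma> \<sigma>) xs ys"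
  then have wf_Fn: "wf_trm ar (Fn f xs)" "wf_trm ar (Fn f ys)"
    using free_alg_carrier_wf[OF wf] by auto
  have "list_all2 (derivable ar \<Sigma>) (map (subst \<sigma>) xs) (map (subst \<sigma>) ys)"
    using a by (auto simp: list_all2_map1 list_all2_map2 subst_kernel_def elim: list_all2_mono)
  then have "derivable ar \<Sigma> (subst \<sigma> (Fn f xs)) (subst \<sigma> (Fn f ys))"
    using a by (auto intro: derivable.cong)
  moreover have "derivable ar \<Sigma> (subst \<sigma> (canon ar \<Sigma> (Fn f zs))) (subst \<sigma> (Fn f zs))"
    if "wf_trm ar (Fn f zs)" for zs
    using derivable_subst[OF derivable_canon[OF that] \<sigma>] .
  ultimately have "derivable ar \<Sigma> (subst \<sigma> (canon ar \<Sigma> (Fn f xs))) (subst \<sigma> (canon ar \<Sigma> (Fn f ys)))"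
    using wf_Fn by (meson derivable.sym derivable.trans)
  moreover have "canon ar \<Sigma> (Fn f zs) \<in> carrier (free_alg ar \<Sigma>)" if "wf_trm ar (Fn f zs)" for zs
    using that by (auto simp: free_alg_def)
  ultimately show "(ops (free_alg ar \<Sigma>) f xs, ops (free_alg ar \<Sigma>) f ys) \<in> subst_kernel ar \<Sigma> \<sigma>"
    using wf_Fn unfolding subst_kernel_def by (simp add: free_alg_def)
qed

lemma canon_Var_in_subst_kernel:
  assumes "wf_subst ar \<sigma>" "\<sigma> i = \<sigma> j"
  shows "(canon ar \<Sigma> (Var i), canon ar \<Sigma> (Var j)) \<in> subst_kernel ar \<Sigma> \<sigma>"
proof -
  have "derivable ar \<Sigma> (subst \<sigma> (canon ar \<Sigma> (Var k))) (\<sigma> k)" for k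
    using derivable_subst[OF derivable_canon[of ar "Var k" \<Sigma>] assms(1)] by simp
  then have "derivable ar \<Sigma> (subst \<sigma> (canon ar \<Sigma> (Var i))) (subst \<sigma> (canon ar \<Sigma> (Var j)))"
    using assms(2) by (metis derivable.sym derivable.trans)
  then show ?thesis
    unfolding subst_kernel_def using canon_Var_in_free_alg by blast
qed

section \<open>Day and Gumm terms induce local operations\<close>

definition assign3 :: "'a \<Rightarrow> 'a \<Rightarrow> 'a \<Rightarrow> nat \<Rightarrow> 'a" where
  "assign3 a b c v = (if v = 0 then a else if v = 1 then b else c)"

definition assign4 :: "'a \<Rightarrow> 'a \<Rightarrow> 'a \<Rightarrow> 'a \<Rightarrow> nat \<Rightarrow> 'a" where
  "assign4 a b c d v = (if v = 1 then b else if v = 2 then c else if v = 3 then d else a)"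

lemma assign3_in_carrier: "a \<in> C \<Longrightarrow> b \<in> C \<Longrightarrow> c \<in> C \<Longrightarrow> assign3 a b c v \<in> C"
  by (simp add: assign3_def)

lemma assign4_in_carrier: "a \<in> C \<Longrightarrow> b \<in> C \<Longrightarrow> c \<in> C \<Longrightarrow> d \<in> C \<Longrightarrow> assign4 a b c d v \<in> C"
  by (simp add: assign4_def)

lemma eval_assign3_congruence:
  assumes "is_alg ar A" "wf_trm ar t" "congruence ar A \<theta>"
    and "(a, a') \<in> \<theta>" "(b, b') \<in> \<theta>" "(c, c') \<in> \<theta>"
  shows "(eval A (assign3 a b c) t, eval A (assign3 a' b' c') t) \<in> \<theta>"
proof (rule eval_congruence[OF assms(3,1)])
  show "\<forall>v. assign3 a b c v \<in> carrier A" "\<forall>v. assign3 a' b' c' v \<in> carrier A"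
    using assms(4-6) congruence_carrier[OF assms(3)] by (simp_all add: assign3_in_carrier)
qed (use assms(2,4-6) in \<open>simp_all add: assign3_def\<close>)

lemma eval_assign4_congruence:
  assumes "is_alg ar A" "wf_trm ar t" "congruence ar A \<theta>"
    and "(a, a') \<in> \<theta>" "(b, b') \<in> \<theta>" "(c, c') \<in> \<theta>" "(d, d') \<in> \<theta>"
  shows "(eval A (assign4 a b c d) t, eval A (assign4 a' b' c' d') t) \<in> \<theta>"
proof (rule eval_congruence[OF assms(3,1)])
  show "\<forall>v. assign4 a b c d v \<in> carrier A" "\<forall>v. assign4 a' b' c' d' v \<in> carrier A"
    using assms(4-7) congruence_carrier[OF assms(3)] by (simp_all add: assign4_in_carrier)
qed (use assms(2,4-7) in \<open>simp_all add: assign4_def\<close>)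

text \<open>The variables x, y, z, u of the Day terms are \<open>Var 0\<close>, \<open>Var 1\<close>, \<open>Var 2\<close>, \<open>Var 3\<close>.\<close>

definition subst_xyyx :: "nat \<Rightarrow> ('f, nat) trm" where
  "subst_xyyx v = (if v = 1 \<or> v = 2 then Var 1 else Var 0)"

definition subst_xxzz :: "nat \<Rightarrow> ('f, nat) trm" where
  "subst_xxzz v = (if v = 2 \<or> v = 3 then Var 2 else Var 0)"

definition subst_xyyu :: "nat \<Rightarrow> ('f, nat) trm" where
  "subst_xyyu v = (if v = 1 \<or> v = 2 then Var 1 else if v = 3 then Var 3 else Var 0)"

lemma wf_subst_identifications:
  "wf_subst ar subst_xyyx" "wf_subst ar subst_xxzz" "wf_subst ar subst_xyyu"
  by (auto simp: wf_subst_def subst_xyyx_def subst_xxzz_def subst_xyyu_def)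

lemma eval_identifications:
  "(\<lambda>v. eval A (assign4 a b c d) (subst_xyyx v)) = assign4 a b b a"
  "(\<lambda>v. eval A (assign4 a b c d) (subst_xxzz v)) = assign4 a a c c"
  "(\<lambda>v. eval A (assign4 a b c d) (subst_xyyu v)) = assign4 a b b d"
  by (auto simp: subst_xyyx_def subst_xxzz_def subst_xyyu_def assign4_def)

text \<open>
  The Day terms are read off from (3,k)-modularity of the free algebra, applied to the kernels of
  the three identifications of variables and to the chain x \<beta> y (\<alpha> \<inter> \<gamma>) z \<beta> u.
\<close>

lemma day_terms:
  fixes ar :: "'f \<Rightarrow> nat"
  assumes "wf_eqs ar \<Sigma>" and "variety_mk_modular TYPE(('f, nat) trm) ar \<Sigma> 3 k"
  obtains u where "u 0 = canon ar \<Sigma> (Var 0)" "u k = canon ar \<Sigma> (Var 3)"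
    and "\<And>i. i \<le> k \<Longrightarrow> wf_trm ar (u i)"
    and "\<And>i. i < k \<Longrightarrow>
      derivable ar \<Sigma> (subst subst_xyyx (u i)) (subst subst_xyyx (u (Suc i)))"
    and "\<And>i. i < k \<Longrightarrow> even i \<Longrightarrow>
      derivable ar \<Sigma> (subst subst_xxzz (u i)) (subst subst_xxzz (u (Suc i)))"
    and "\<And>i. i < k \<Longrightarrow> odd i \<Longrightarrow>
      derivable ar \<Sigma> (subst subst_xyyu (u i)) (subst subst_xyyu (u (Suc i)))"
proof -
  let ?F = "free_alg ar \<Sigma>" and ?X = "\<lambda>i. canon ar \<Sigma> (Var i)"
  let ?\<alpha> = "subst_kernel ar \<Sigma> subst_xyyx" and ?\<beta> = "subst_kernel ar \<Sigma> subst_xxzz"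
    and ?\<gamma> = "subst_kernel ar \<Sigma> subst_xyyu"
  have cong: "congruence ar ?F ?\<alpha>" "congruence ar ?F ?\<beta>" "congruence ar ?F ?\<gamma>"
    using congruence_subst_kernel[OF assms(1)] wf_subst_identifications by blast+
  have "(?X 0, ?X 3) \<in> ?\<alpha>" "(?X 0, ?X 1) \<in> ?\<beta>" "(?X 1, ?X 2) \<in> ?\<alpha> \<inter> ?\<gamma>" "(?X 2, ?X 3) \<in> ?\<beta>"
    by (auto intro!: canon_Var_in_subst_kernel wf_subst_identifications
        simp: subst_xyyx_def subst_xxzz_def subst_xyyu_def)
  then have "(?X 0, ?X 3) \<in> ?\<alpha> \<inter> comp_alt ?\<beta> (?\<alpha> \<inter> ?\<gamma>) 3"
    by (auto simp: numeral_3_eq_3)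
  moreover have "alg_mk_modular ar 3 k ?F"
    using assms(2) models_free_alg[OF assms(1)] unfolding variety_mk_modular_def by blast
  ultimately have "(?X 0, ?X 3) \<in> comp_alt (?\<alpha> \<inter> ?\<beta>) (?\<alpha> \<inter> ?\<gamma>) k"
    using cong unfolding alg_mk_modular_def by blast
  then obtain u where u: "u 0 = ?X 0" "u k = ?X 3" "alt_walk (?\<alpha> \<inter> ?\<beta>) (?\<alpha> \<inter> ?\<gamma>) k u"
    unfolding comp_alt_iff_alt_walk by blast
  then have step: "(u i, u (Suc i)) \<in> alt_rel (?\<alpha> \<inter> ?\<beta>) (?\<alpha> \<inter> ?\<gamma>) i" if "i < k" for i
    using that by (simp add: alt_walk_def)
  show thesis
  proof (rule that[OF u(1,2)])
    fix i assume "i \<le> k"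
    then have "u i \<in> carrier ?F"
      using step[of i] u(2) canon_Var_in_free_alg
      by (cases "i = k") (auto simp: subst_kernel_def alt_rel_def split: if_splits)
    then show "wf_trm ar (u i)" using free_alg_carrier_wf[OF assms(1)] by blast
  next
    fix i assume "i < k"
    with step[of i] show "derivable ar \<Sigma> (subst subst_xyyx (u i)) (subst subst_xyyx (u (Suc i)))"
      by (auto simp: subst_kernel_def alt_rel_def split: if_splits)
  next
    fix i assume "i < k" "even i"
    with step[of i] show "derivable ar \<Sigma> (subst subst_xxzz (u i)) (subst subst_xxzz (u (Suc i)))"
      by (simp add: subst_kernel_def alt_rel_def)
  next
    fix i assume "i < k" "odd i"
    with step[of i] show "derivable ar \<Sigma> (subst subst_xyyu (u i)) (subst subst_xyyu (u (Suc i)))"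
      by (simp add: subst_kernel_def alt_rel_def)
  qed
qed

lemma day_operations_in_model:
  fixes ar :: "'f \<Rightarrow> nat" and A :: "('f, 'a) alg"
  assumes "wf_eqs ar \<Sigma>" "variety_mk_modular TYPE(('f, nat) trm) ar \<Sigma> 3 (2*r)" "models ar \<Sigma> A"
  shows "\<exists>M. day_operations ar A r M"
proof -
  obtain u where u0: "u 0 = canon ar \<Sigma> (Var 0)" and u2r: "u (2*r) = canon ar \<Sigma> (Var 3)"
    and wf: "\<And>i. i \<le> 2*r \<Longrightarrow> wf_trm ar (u i)"
    and xyyx: "\<And>i. i < 2*r \<Longrightarrow>
      derivable ar \<Sigma> (subst subst_xyyx (u i)) (subst subst_xyyx (u (Suc i)))"
    and xxzz: "\<And>i. i < 2*r \<Longrightarrow> even i \<Longrightarrow>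
      derivable ar \<Sigma> (subst subst_xxzz (u i)) (subst subst_xxzz (u (Suc i)))"
    and xyyu: "\<And>i. i < 2*r \<Longrightarrow> odd i \<Longrightarrow>
      derivable ar \<Sigma> (subst subst_xyyu (u i)) (subst subst_xyyu (u (Suc i)))"
    using day_terms[OF assms(1,2)] by blast
  have alg: "is_alg ar A" using assms(3) by (simp add: models_def)
  have sound: "eval A \<rho> s = eval A \<rho> t" if "derivable ar \<Sigma> s t" "\<forall>v. \<rho> v \<in> carrier A" for s t \<rho>
    using derivable_sound[OF assms(3,1) that] .
  have "day_operations ar A r (\<lambda>i a b c d. eval A (assign4 a b c d) (u i))"
  proof unfold_locales
    show "(eval A (assign4 a b c d) (u i), eval A (assign4 a' b' c' d') (u i)) \<in> \<theta>"
      if "i \<le> 2*r" "congruence ar A \<theta>" "(a, a') \<in> \<theta>" "(b, b') \<in> \<theta>" "(c, c') \<in> \<theta>" "(d, d') \<in> \<theta>"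
      for i \<theta> a a' b b' c c' d d'
      using that by (intro eval_assign4_congruence[OF alg wf])
    fix a b c d assume "a \<in> carrier A" "b \<in> carrier A" "c \<in> carrier A" "d \<in> carrier A"
    then have "\<forall>v. assign4 a b c d v \<in> carrier A" by (simp add: assign4_in_carrier)
    then have "eval A (assign4 a b c d) (u 0) = eval A (assign4 a b c d) (Var 0)"
      "eval A (assign4 a b c d) (u (2*r)) = eval A (assign4 a b c d) (Var 3)"
      unfolding u0 u2r by (blast intro: sound derivable_canon wf_trm.simps(1)[THEN iffD2])+
    then show "eval A (assign4 a b c d) (u 0) = a" "eval A (assign4 a b c d) (u (2*r)) = d"
      by (simp_all add: assign4_def)
  next
    show "eval A (assign4 a b b a) (u i) = eval A (assign4 a b b a) (u (Suc i))"
      if "i < 2*r" "a \<in> carrier A" "b \<in> carrier A" for i a b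
      using that sound[OF xyyx, of i "assign4 a b b a"]
      by (simp add: eval_subst eval_identifications assign4_in_carrier)
    show "eval A (assign4 a a c c) (u i) = eval A (assign4 a a c c) (u (Suc i))"
      if "i < 2*r" "even i" "a \<in> carrier A" "c \<in> carrier A" for i a c
      using that sound[OF xxzz, of i "assign4 a a c c"]
      by (simp add: eval_subst eval_identifications assign4_in_carrier)
    show "eval A (assign4 a b b d) (u i) = eval A (assign4 a b b d) (u (Suc i))"
      if "i < 2*r" "odd i" "a \<in> carrier A" "b \<in> carrier A" "d \<in> carrier A" for i a b d
      using that sound[OF xyyu, of i "assign4 a b b d"]
      by (simp add: eval_subst eval_identifications assign4_in_carrier)
  qed
  then show ?thesis by blast
qed

lemma wf_trm_tern: "ternary_term ar t \<Longrightarrow> wf_trm ar (tern t (Var i) (Var j) (Var k))"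
  unfolding tern_def ternary_term_def by (rule wf_trm_subst) (auto simp: wf_subst_def)

lemma eval_tern:
  "ternary_term ar t \<Longrightarrow> eval A \<rho> (tern t (Var i) (Var j) (Var k)) = eval A (assign3 (\<rho> i) (\<rho> j) (\<rho> k)) t"
  unfolding tern_def eval_subst ternary_term_def
  by (rule eval_cong) (auto simp: assign3_def)

lemma gumm_operations_in_model:
  fixes ar :: "'f \<Rightarrow> nat" and A :: "('f, 'a) alg"
  assumes "wf_eqs ar \<Sigma>" "has_gumm_terms TYPE(('f, nat) trm) ar \<Sigma> n" "models ar \<Sigma> A"
  shows "\<exists>P J. gumm_operations ar A n P J"
proof -
  let ?holds = "holds_in TYPE(('f, nat) trm) ar \<Sigma>" and ?x = "Var 0 :: ('f, nat) trm"
    and ?y = "Var 1 :: ('f, nat) trm" and ?z = "Var 2 :: ('f, nat) trm"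
  obtain p j where tp: "ternary_term ar p" and tj0: "\<forall>i\<in>{1..n+1}. ternary_term ar (j i)"
    and j_xyx: "\<forall>i\<in>{1..n+1}. ?holds ?x (tern (j i) ?x ?y ?x)"
    and p_xzz: "?holds ?x (tern p ?x ?z ?z)"
    and p_xxz: "?holds (tern p ?x ?x ?z) (tern (j 1) ?x ?x ?z)"
    and j_xzz: "\<forall>i. 1 \<le> i \<and> i \<le> n \<and> odd i \<longrightarrow> ?holds (tern (j i) ?x ?z ?z) (tern (j (i+1)) ?x ?z ?z)"
    and j_xxz: "\<forall>i. 1 \<le> i \<and> i \<le> n \<and> even i \<longrightarrow> ?holds (tern (j i) ?x ?x ?z) (tern (j (i+1)) ?x ?x ?z)"
    and j_last: "?holds (tern (j (n+1)) ?x ?y ?z) ?z"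
    using assms(2) unfolding has_gumm_terms_def Let_def by blast
  have tj: "ternary_term ar (j i)" if "1 \<le> i" "i \<le> n+1" for i
    using tj0 that by simp
  have alg: "is_alg ar A" using assms(3) by (simp add: models_def)
  have holds: "eval A (assign3 a b c) s = eval A (assign3 a b c) t"
    if "?holds s t" "wf_trm ar s" "wf_trm ar t" "a \<in> carrier A" "b \<in> carrier A" "c \<in> carrier A" for s t a b c
    using holds_in_imp_satisfies[OF assms(1) that(1-3) assms(3)] that(4-6)
    by (simp add: satisfies_def assign3_in_carrier)
  have "gumm_operations ar A n (\<lambda>a b c. eval A (assign3 a b c) p)
      (\<lambda>i a b c. eval A (assign3 a b c) (j i))"
  proof unfold_locales
    show "(eval A (assign3 a b c) p, eval A (assign3 a' b' c') p) \<in> \<theta>"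
      if "congruence ar A \<theta>" "(a, a') \<in> \<theta>" "(b, b') \<in> \<theta>" "(c, c') \<in> \<theta>" for \<theta> a a' b b' c c'
      using that tp unfolding ternary_term_def by (intro eval_assign3_congruence[OF alg]) auto
    show "(eval A (assign3 a b c) (j i), eval A (assign3 a' b' c') (j i)) \<in> \<theta>"
      if "1 \<le> i" "i \<le> n+1" "congruence ar A \<theta>" "(a, a') \<in> \<theta>" "(b, b') \<in> \<theta>" "(c, c') \<in> \<theta>"
      for i \<theta> a a' b b' c c'
      using that tj unfolding ternary_term_def by (intro eval_assign3_congruence[OF alg]) auto
  qed (use holds[OF j_xyx[rule_format]] holds[OF p_xzz] holds[OF p_xxz] holds[OF j_xzz[rule_format]]
      holds[OF j_xxz[rule_format]] holds[OF j_last]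
    in \<open>simp_all add: eval_tern[OF tp] eval_tern[OF tj] wf_trm_tern tj tp assign3_def\<close>)
  then show ?thesis by blast
qed

section \<open>The modularity bound\<close>

lemma int_sum_pow2_minus_1:
  "int (\<Sum>i<j. 2^(i+q+1) - 1) = 2^(q+1) * (2^j - 1) - int j"
proof -
  have "int (\<Sum>i<j. 2^(i+q+1) - 1) = (\<Sum>i<j. 2^(i+q+1) - 1 :: int)"
    by (simp add: of_nat_diff)
  also have "\<dots> = 2^(q+1) * (2^j - 1) - int j"
    by (induction j) (simp_all add: algebra_simps power_add)
  finally show ?thesis .
qed

lemma nat_bound_eq_sum:
  "nat (2 * int r ^ q + (2 ^ q * 2 ^ (Suc j + 1) - 2 ^ (q + 2) - 2 * int (Suc j) + 2) * int n)
    = 2 * r^q + 2*n*(\<Sum>i<j. 2^(i+q+1) - 1)"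
proof -
  have "int (2 * r^q + 2*n*(\<Sum>i<j. 2^(i+q+1) - 1))
      = 2 * int r ^ q + 2 * int n * int (\<Sum>i<j. 2^(i+q+1) - 1)"
    by (simp only: of_nat_add of_nat_mult of_nat_power of_nat_numeral)
  also have "\<dots> = 2 * int r ^ q + (2 ^ q * 2 ^ (Suc j + 1) - 2 ^ (q + 2) - 2 * int (Suc j) + 2) * int n"
    unfolding int_sum_pow2_minus_1 by (simp add: algebra_simps power_add)
  finally show ?thesis
    by (metis nat_int)
qed

theorem theorem5p1:
  fixes ar :: "'f \<Rightarrow> nat"
    and \<Sigma> :: "(('f, nat) trm \<times> ('f, nat) trm) set"
    and r p q n :: nat
  assumes "r \<ge> 1" and "p \<ge> 1" and "q \<ge> 1"
    and "\<forall>(s, t)\<in>\<Sigma>. wf_trm ar s \<and> wf_trm ar t"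
    and "variety_mk_modular TYPE(('f, nat) trm) ar \<Sigma> 3 (2 * r)"
    and "has_gumm_terms TYPE(('f, nat) trm) ar \<Sigma> n"
  shows "variety_mk_modular TYPE('a) ar \<Sigma> (2 ^ p * 2 ^ q - 1)
           (nat (2 * int r ^ q + (2 ^ q * 2 ^ (p + 1) - 2 ^ (q + 2) - 2 * int p + 2) * int n))"
  unfolding variety_mk_modular_def
proof (intro allI impI)
  fix A :: "('f, 'a) alg"
  assume A: "models ar \<Sigma> A"
  have wf: "wf_eqs ar \<Sigma>" using assms(4) unfolding wf_eqs_def .
  obtain j where p: "p = Suc j" using assms(2) not0_implies_Suc by fastforce
  obtain M where "day_operations ar A r M"
    using day_operations_in_model[OF wf assms(5) A] by blast
  then have "alg_mk_modular ar (2^(q+1) - 1) (2 * r^q) A"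
    using assms(1) by (rule day_operations.alg_mk_modular_day_iterate)
  moreover obtain P J where "gumm_operations ar A n P J"
    using gumm_operations_in_model[OF wf assms(6) A] by blast
  ultimately have "alg_mk_modular ar (2^(j+q+1) - 1) (2 * r^q + 2*n*(\<Sum>i<j. 2^(i+q+1) - 1)) A"
    using assms(1) by (intro gumm_operations.alg_mk_modular_gumm_iterate) simp_all
  moreover have "2^(j+q+1) - 1 = (2 ^ p * 2 ^ q - 1 :: nat)"
    by (simp add: p power_add)
  ultimately show "alg_mk_modular ar (2 ^ p * 2 ^ q - 1)
      (nat (2 * int r ^ q + (2 ^ q * 2 ^ (p + 1) - 2 ^ (q + 2) - 2 * int p + 2) * int n)) A"
    unfolding p nat_bound_eq_sum by simp
qed

end
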